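(* Let $(N,v)$ be a balanced game such that $\mathscr{F}:=\mathscr{VE}(N,v)$ is core-describing. If $(N,v)$ is $\mathscr{F}$-weakly extendable, then $(N,v)$ has a nonempty and stable core.
   Context: A game $(N,v)$: $N$ finite nonempty, $v:2^N\to\mathbb{R}$, $v(\varnothing)=0$; $x(S)=\sum_{i\in S}x_i$. Preimputations $X(N,v)=\{x\mid x(N)=v(N)\}$; imputations $I(N,v)=\{x\in X(N,v)\mid x_i\ge v(\{i\})\ \forall i\}$; core $C(N,v)=\{x\in X(N,v)\mid x(S)\ge v(S)\ \forall S\subseteq N\}$; balanced means nonempty core. For a coalition $S$, $C(S,v)=\{y\in\mathbb{R}^S\mid y(S)=v(S),\ y(T)\ge v(T)\ \forall T\subseteq S\}$. $x$ dominates $y$ via $S$ if $x(S)\le v(S)$ and $x_i>y_i$ for all $i\in S$. A set $U\subseteq I(N,v)$ is stable if no element of $U$ dominates another element of $U$ and every $y\in I(N,v)\setminus U$ is dominated by some $x\in U$. $S$ is strictly vital-exact if some $x\in C(N,v)$ has $x(S)=v(S)$ and $x(T)>v(T)$ for all $\varnothing\ne T\subsetneq S$; $\mathscr{VE}(N,v)$ is the set of these. $\mathscr{F}$ is core-describing if $C(N,v)=\{x\in X(N,v)\mid x(S)\ge v(S)\ \forall S\in\mathscr{F}\}$. For $\mathscr{S}\subseteq\mathscr{F}$, $\mathscr{S}$ is $\mathscr{F}$-feasible if $\{x\in X(N,v)\mid x(S)<v(S)\ \forall S\in\mathscr{S},\ x(T)\ge v(T)\ \forall T\in\mathscr{F}\setminus\mathscr{S}\}\neq\varnothing$.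 A coalition $S$ is extendable if for every $y\in C(S,v)$ there is $x\in C(N,v)$ with $x_i=y_i$ for all $i\in S$. The game is $\mathscr{F}$-weakly extendable if every nonempty $\mathscr{F}$-feasible collection contains an inclusion-minimal element (minimal within that collection) which is extendable. *)

theory Defs
  imports "HOL-Analysis.Analysis"
begin

(* A TU game on the finite nonempty player set N with characteristic function v,
   v {} = 0.  Payoff vectors in R^S are represented as functions 'a => real
   that vanish outside S. *)

definition game :: "'a set \<Rightarrow> ('a set \<Rightarrow> real) \<Rightarrow> bool" where
  "game N v \<longleftrightarrow> finite N \<and> N \<noteq> {} \<and> v {} = 0"

definition vecs :: "'a set \<Rightarrow> ('a \<Rightarrow> real) set" where
  "vecs S = {x. \<forall>i. i \<notin> S \<longrightarrow> x i = 0}"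

definition xs :: "('a \<Rightarrow> real) \<Rightarrow> 'a set \<Rightarrow> real" where
  "xs x S = (\<Sum>i\<in>S. x i)"

definition preimputations :: "'a set \<Rightarrow> ('a set \<Rightarrow> real) \<Rightarrow> ('a \<Rightarrow> real) set" where
  "preimputations N v = {x \<in> vecs N. xs x N = v N}"

definition imputations :: "'a set \<Rightarrow> ('a set \<Rightarrow> real) \<Rightarrow> ('a \<Rightarrow> real) set" where
  "imputations N v = {x \<in> preimputations N v. \<forall>i\<in>N. x i \<ge> v {i}}"

definition core :: "'a set \<Rightarrow> ('a set \<Rightarrow> real) \<Rightarrow> ('a \<Rightarrow> real) set" where
  "core S v = {y \<in> vecs S. xs y S = v S \<and> (\<forall>T. T \<subseteq> S \<longrightarrow> xs y T \<ge> v T)}"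

definition balanced :: "'a set \<Rightarrow> ('a set \<Rightarrow> real) \<Rightarrow> bool" where
  "balanced N v \<longleftrightarrow> core N v \<noteq> {}"

definition dominates_via :: "'a set \<Rightarrow> ('a set \<Rightarrow> real) \<Rightarrow> 'a set
    \<Rightarrow> ('a \<Rightarrow> real) \<Rightarrow> ('a \<Rightarrow> real) \<Rightarrow> bool" where
  "dominates_via N v S x y \<longleftrightarrow> S \<noteq> {} \<and> S \<subseteq> N \<and> xs x S \<le> v S \<and> (\<forall>i\<in>S. x i > y i)"

definition dominates :: "'a set \<Rightarrow> ('a set \<Rightarrow> real) \<Rightarrow> ('a \<Rightarrow> real) \<Rightarrow> ('a \<Rightarrow> real) \<Rightarrow> bool" where
  "dominates N v x y \<longleftrightarrow> (\<exists>S. dominates_via N v S x y)"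

definition stable :: "'a set \<Rightarrow> ('a set \<Rightarrow> real) \<Rightarrow> ('a \<Rightarrow> real) set \<Rightarrow> bool" where
  "stable N v U \<longleftrightarrow> U \<subseteq> imputations N v
     \<and> (\<forall>x\<in>U. \<forall>y\<in>U. \<not> dominates N v x y)
     \<and> (\<forall>y\<in>imputations N v - U. \<exists>x\<in>U. dominates N v x y)"

definition strictly_vital_exact :: "'a set \<Rightarrow> ('a set \<Rightarrow> real) \<Rightarrow> 'a set \<Rightarrow> bool" where
  "strictly_vital_exact N v S \<longleftrightarrow> S \<noteq> {} \<and> S \<subseteq> N \<and>
     (\<exists>x\<in>core N v. xs x S = v S \<and> (\<forall>T. T \<noteq> {} \<and> T \<subset> S \<longrightarrow> xs x T > v T))"

definition VE :: "'a set \<Rightarrow> ('a set \<Rightarrow> real) \<Rightarrow> 'a set set" where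
  "VE N v = {S. strictly_vital_exact N v S}"

definition core_describing :: "'a set \<Rightarrow> ('a set \<Rightarrow> real) \<Rightarrow> 'a set set \<Rightarrow> bool" where
  "core_describing N v F \<longleftrightarrow> F \<subseteq> Pow N \<and>
     core N v = {x \<in> preimputations N v. \<forall>S\<in>F. xs x S \<ge> v S}"

definition feasible :: "'a set \<Rightarrow> ('a set \<Rightarrow> real) \<Rightarrow> 'a set set \<Rightarrow> 'a set set \<Rightarrow> bool" where
  "feasible N v F \<SS> \<longleftrightarrow> \<SS> \<subseteq> F \<and>
     {x \<in> preimputations N v. (\<forall>S\<in>\<SS>. xs x S < v S) \<and> (\<forall>T\<in>F - \<SS>. xs x T \<ge> v T)} \<noteq> {}"

definition extendable :: "'a set \<Rightarrow> ('a set \<Rightarrow> real) \<Rightarrow> 'a set \<Rightarrow> bool" where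
  "extendable N v S \<longleftrightarrow> (\<forall>y\<in>core S v. \<exists>x\<in>core N v. \<forall>i\<in>S. x i = y i)"

definition weakly_extendable :: "'a set \<Rightarrow> ('a set \<Rightarrow> real) \<Rightarrow> 'a set set \<Rightarrow> bool" where
  "weakly_extendable N v F \<longleftrightarrow> (\<forall>\<SS>. feasible N v F \<SS> \<and> \<SS> \<noteq> {} \<longrightarrow>
     (\<exists>S\<in>\<SS>. (\<forall>T\<in>\<SS>. \<not> T \<subset> S) \<and> extendable N v S))"

end

theory Submission
  imports Defs
begin

text \<open>
  Internal stability of the core is immediate. For external stability take an imputation y
  outside the core; the \<open>VE\<close>-constraints it violates form a feasible collection, so it contains
  a minimal extendable coalition S. Raising y uniformly on S to u with u(S) = v(S) keeps every
  \<open>VE\<close>-constraint of a proper subcoalition of S satisfied (by minimality of S), and this already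
  forces u into C(S,v): otherwise, walking from a core element z that witnesses S \<in> \<open>VE\<close> towards u, the last point q
  still in C(S,v) makes some proper subcoalition tight, and an inclusion-minimal tight
  coalition R is, after extending q to the core, strictly vital-exact with u(R) < v(R).
  Extending u to a core element x then gives a domination of y via S.
\<close>

lemma xs_empty [simp]: "xs x {} = 0"
  by (simp add: xs_def)

lemma xs_singleton [simp]: "xs x {i} = x i"
  by (simp add: xs_def)

lemma xs_cong: "(\<And>i. i \<in> T \<Longrightarrow> x i = y i) \<Longrightarrow> xs x T = xs y T"
  by (simp add: xs_def)

lemma xs_strict_mono:
  assumes "finite S" "S \<noteq> {}" "\<And>i. i \<in> S \<Longrightarrow> y i < x i"
  shows "xs y S < xs x S"
  unfolding xs_def using sum_strict_mono[OF assms] .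

lemma core_subset_imputations: "core N v \<subseteq> imputations N v"
  by (force simp: core_def imputations_def preimputations_def)

lemma core_undominated:
  assumes "finite N" "y \<in> core N v"
  shows "\<not> dominates N v x y"
proof
  assume "dominates N v x y"
  then obtain S where S: "S \<noteq> {}" "S \<subseteq> N" "xs x S \<le> v S" "\<forall>i\<in>S. y i < x i"
    by (auto simp: dominates_def dominates_via_def)
  have "xs y S < xs x S"
    using S by (intro xs_strict_mono) (auto intro: finite_subset[OF _ assms(1)])
  moreover have "v S \<le> xs y S"
    using assms(2) S(2) by (simp add: core_def)
  ultimately show False
    using S(3) by simp
qed

definition segment_point :: "'a set \<Rightarrow> real \<Rightarrow> ('a \<Rightarrow> real) \<Rightarrow> ('a \<Rightarrow> real) \<Rightarrow> 'a \<Rightarrow> real"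
  where "segment_point S t z u i = (if i \<in> S then z i + t * (u i - z i) else 0)"

lemma xs_segment_point:
  assumes "T \<subseteq> S"
  shows "xs (segment_point S t z u) T = xs z T + t * (xs u T - xs z T)"
proof -
  have "xs (segment_point S t z u) T = (\<Sum>i\<in>T. z i + t * (u i - z i))"
    unfolding xs_def segment_point_def using assms by (intro sum.cong) auto
  also have "\<dots> = xs z T + t * (xs u T - xs z T)"
    by (simp add: xs_def sum.distrib sum_subtractf flip: sum_distrib_left)
  finally show ?thesis .
qed

text \<open>The exit parameter t is the least ratio (z(T) - v(T)) / (z(T) - u(T)) over the
  coalitions T violated by u.\<close>

lemma segment_leaves_core:
  assumes "finite S"
    and z_ge: "\<And>T. T \<subseteq> S \<Longrightarrow> v T \<le> xs z T" and zS: "xs z S = v S"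
    and uS: "xs u S = v S" and violated: "\<exists>T\<subseteq>S. xs u T < v T"
  obtains t T0 where "0 \<le> t" "t < 1" "segment_point S t z u \<in> core S v"
    "T0 \<subseteq> S" "xs u T0 < v T0" "xs (segment_point S t z u) T0 = v T0"
proof -
  define B where "B = {T. T \<subseteq> S \<and> xs u T < v T}"
  define r where "r T = (xs z T - v T) / (xs z T - xs u T)" for T
  define t where "t = Min (r ` B)"
  define q where "q = segment_point S t z u"
  have "finite B" "B \<noteq> {}"
    using assms(1) violated by (auto simp: B_def)
  then have "t \<in> r ` B"
    unfolding t_def by (intro Min_in) auto
  then obtain T0 where T0: "T0 \<in> B" "t = r T0"
    by blast
  have gap: "xs u T < v T" "v T \<le> xs z T" if "T \<in> B" for T
    using that z_ge by (auto simp: B_def)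
  have t_le: "t \<le> r T" if "T \<in> B" for T
    unfolding t_def using \<open>finite B\<close> that by simp
  have T0_gap: "0 < xs z T0 - xs u T0"
    using gap[OF T0(1)] by linarith
  have t: "0 \<le> t" "t < 1"
    using T0_gap gap[OF T0(1)] by (simp_all add: T0(2) r_def divide_less_eq)
  have t_T0: "t * (xs z T0 - xs u T0) = xs z T0 - v T0"
    using T0_gap by (simp add: T0(2) r_def)
  have q_ge: "v T \<le> xs q T" if "T \<subseteq> S" for T
  proof (cases "T \<in> B")
    case True
    with t_le have "t * (xs z T - xs u T) \<le> xs z T - v T"
      using gap[OF True] by (simp add: r_def le_divide_eq)
    then show ?thesis
      using xs_segment_point[OF that, of t z u] by (simp add: q_def algebra_simps)
  next
    case False
    then have "v T \<le> xs u T"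
      using that by (auto simp: B_def)
    then have "0 \<le> t * (xs u T - v T)" "0 \<le> (1 - t) * (xs z T - v T)"
      using z_ge[OF that] t by simp_all
    then show ?thesis
      using xs_segment_point[OF that, of t z u] by (simp add: q_def algebra_simps)
  qed
  have "xs q S = v S"
    using xs_segment_point[of S S] zS uS by (simp add: q_def)
  then have "q \<in> core S v"
    using q_ge by (auto simp: core_def vecs_def q_def segment_point_def)
  moreover have "xs q T0 = v T0"
    using t_T0 xs_segment_point[of T0 S t z u] T0(1) by (simp add: q_def B_def algebra_simps)
  ultimately show thesis
    using that t T0(1) by (auto simp: q_def B_def)
qed

lemma minimal_tight_strictly_vital_exact:
  assumes "x \<in> core N v" "R \<noteq> {}" "R \<subseteq> N" "xs x R = v R"
    and "\<And>T. T \<noteq> {} \<Longrightarrow> T \<subset> R \<Longrightarrow> xs x T \<noteq> v T"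
  shows "strictly_vital_exact N v R"
proof -
  have "v T < xs x T" if "T \<noteq> {}" "T \<subset> R" for T
  proof -
    have "v T \<le> xs x T"
      using assms(1,3) that(2) by (simp add: core_def)
    with assms(5)[OF that] show ?thesis
      by simp
  qed
  then show ?thesis
    using assms unfolding strictly_vital_exact_def by blast
qed

lemma VE_constraints_describe_subcore:
  assumes "finite N" "v {} = 0"
    and S: "strictly_vital_exact N v S" "extendable N v S"
    and uS: "xs u S = v S" and uVE: "\<And>T. T \<in> VE N v \<Longrightarrow> T \<subset> S \<Longrightarrow> v T \<le> xs u T"
    and "T \<subseteq> S"
  shows "v T \<le> xs u T"
proof (rule ccontr)
  assume "\<not> v T \<le> xs u T"
  with \<open>T \<subseteq> S\<close> have violated: "\<exists>T\<subseteq>S. xs u T < v T"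
    by auto
  have SN: "S \<subseteq> N"
    and "\<exists>z\<in>core N v. xs z S = v S \<and> (\<forall>T. T \<noteq> {} \<and> T \<subset> S \<longrightarrow> v T < xs z T)"
    using S(1) by (simp_all add: strictly_vital_exact_def)
  then obtain z where z: "z \<in> core N v" "xs z S = v S"
    and z_strict: "\<And>T. T \<noteq> {} \<Longrightarrow> T \<subset> S \<Longrightarrow> v T < xs z T"
    by auto
  have "finite S"
    using SN assms(1) finite_subset by blast
  moreover have "v T \<le> xs z T" if "T \<subseteq> S" for T
    using z(1) that SN by (auto simp: core_def)
  ultimately obtain t T0 where t: "0 \<le> t" "t < 1"
    and q_core: "segment_point S t z u \<in> core S v"
    and T0: "T0 \<subseteq> S" "xs u T0 < v T0" "xs (segment_point S t z u) T0 = v T0"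
    using segment_leaves_core[of S v z u] z(2) uS violated by blast
  define q where "q = segment_point S t z u"
  define tight where "tight = {T. T \<noteq> {} \<and> T \<subset> S \<and> xs q T = v T}"
  have "T0 \<noteq> {}" "T0 \<noteq> S"
    using T0(2) uS assms(2) by auto
  then have "T0 \<in> tight"
    using T0(1,3) unfolding tight_def q_def by auto
  moreover have "tight \<subseteq> Pow S"
    by (auto simp: tight_def)
  then have "finite tight"
    using \<open>finite S\<close> finite_subset by blast
  ultimately obtain R where R: "R \<in> tight" and R_min: "\<And>T. T \<in> tight \<Longrightarrow> T \<subseteq> R \<Longrightarrow> R = T"
    using finite_has_minimal[of tight] by blast
  have R_props: "R \<noteq> {}" "R \<subset> S" "xs q R = v R"
    using R by (auto simp: tight_def)
  have "xs u R < v R"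
  proof (rule ccontr)
    assume "\<not> xs u R < v R"
    then have "0 \<le> t * (xs u R - v R)" "0 < (1 - t) * (xs z R - v R)"
      using z_strict[OF R_props(1,2)] t by simp_all
    then show False
      using R_props xs_segment_point[of R S t z u] by (simp add: q_def algebra_simps)
  qed
  obtain x where x: "x \<in> core N v" and "\<forall>i\<in>S. x i = q i"
    using S(2) q_core unfolding extendable_def q_def by blast
  then have x_eq: "xs x T = xs q T" if "T \<subseteq> S" for T
    using that by (auto intro: xs_cong)
  have "strictly_vital_exact N v R"
  proof (rule minimal_tight_strictly_vital_exact[OF x R_props(1)])
    show "R \<subseteq> N" "xs x R = v R"
      using R_props SN x_eq by auto
    show "xs x T' \<noteq> v T'" if "T' \<noteq> {}" "T' \<subset> R" for T'
      using that R_props R_min[of T'] x_eq[of T'] by (auto simp: tight_def)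
  qed
  then have "v R \<le> xs u R"
    using uVE R_props(2) by (simp add: VE_def)
  with \<open>xs u R < v R\<close> show False
    by simp
qed

lemma core_dominates_outside:
  assumes "game N v" "core_describing N v (VE N v)" "weakly_extendable N v (VE N v)"
    and y: "y \<in> preimputations N v" "y \<notin> core N v"
  shows "\<exists>x\<in>core N v. dominates N v x y"
proof -
  from assms(1) have "finite N" "v {} = 0"
    by (auto simp: game_def)
  define violated where "violated = {S \<in> VE N v. xs y S < v S}"
  have "feasible N v (VE N v) violated"
    unfolding feasible_def violated_def using y(1) by auto
  moreover have "violated \<noteq> {}"
    using assms(2) y unfolding core_describing_def violated_def by (auto simp: not_less)
  ultimately obtain S where "S \<in> violated" and S_min: "\<And>T. T \<in> violated \<Longrightarrow> \<not> T \<subset> S"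
    and S_ext: "extendable N v S"
    using assms(3) unfolding weakly_extendable_def by blast
  then have S_sve: "strictly_vital_exact N v S" and yS: "xs y S < v S"
    by (auto simp: violated_def VE_def)
  then have "S \<noteq> {}" "S \<subseteq> N"
    by (auto simp: strictly_vital_exact_def)
  then have "finite S" "card S > 0"
    using \<open>finite N\<close> finite_subset card_gt_0_iff by blast+
  define d where "d = (v S - xs y S) / card S"
  define u where "u i = (if i \<in> S then y i + d else 0)" for i
  have "d > 0"
    using yS \<open>card S > 0\<close> by (simp add: d_def)
  have xs_u: "xs u T = xs y T + d * card T" if "T \<subseteq> S" for T
  proof -
    have "xs u T = (\<Sum>i\<in>T. y i + d)"
      unfolding xs_def u_def using that by (intro sum.cong) auto
    then show ?thesis
      by (simp add: xs_def sum.distrib)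
  qed
  have uS: "xs u S = v S"
    using xs_u[of S] \<open>card S > 0\<close> by (simp add: d_def)
  have u_VE: "v T \<le> xs u T" if "T \<in> VE N v" "T \<subset> S" for T
  proof -
    have "v T \<le> xs y T"
      using S_min[of T] that by (force simp: violated_def)
    moreover have "0 \<le> d * card T"
      using \<open>d > 0\<close> by simp
    ultimately show ?thesis
      using xs_u[of T] that(2) by simp
  qed
  have "u \<in> core S v"
    using VE_constraints_describe_subcore[OF \<open>finite N\<close> \<open>v {} = 0\<close> S_sve S_ext uS u_VE] uS
    unfolding core_def vecs_def by (simp add: u_def)
  then obtain x where x: "x \<in> core N v" and x_eq: "\<forall>i\<in>S. x i = u i"
    using S_ext unfolding extendable_def by blast
  have "xs x S = v S"
    using x_eq uS by (metis xs_cong)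
  then have "dominates_via N v S x y"
    using \<open>S \<noteq> {}\<close> \<open>S \<subseteq> N\<close> x_eq \<open>d > 0\<close> by (auto simp: dominates_via_def u_def)
  with x show ?thesis
    by (auto simp: dominates_def)
qed

theorem proposition7p4:
  fixes N :: "'a set" and v :: "'a set \<Rightarrow> real"
  assumes "game N v"
    and "balanced N v"
    and "core_describing N v (VE N v)"
    and "weakly_extendable N v (VE N v)"
  shows "core N v \<noteq> {} \<and> stable N v (core N v)"
proof -
  have "finite N"
    using assms(1) by (simp add: game_def)
  then have "\<forall>x\<in>core N v. \<forall>y\<in>core N v. \<not> dominates N v x y"
    by (blast dest: core_undominated)
  moreover have "\<forall>y\<in>imputations N v - core N v. \<exists>x\<in>core N v. dominates N v x y"
    using core_dominates_outside[OF assms(1,3,4)] by (auto simp: imputations_def)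
  ultimately show ?thesis
    using assms(2) core_subset_imputations[of N v] unfolding balanced_def stable_def by blast
qed

end
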